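(* Let $G=(V,E)$ be a finite, connected, triangle-free graph that contains no dominated vertices and for which $\gamma(G)\ge 3$. Then $\mathrm{cc}(G)>2$.
   Context: All graphs are finite, connected and reflexive (a loop at every vertex; moving along a loop means passing); loops are ignored for triangles and neighbourhoods. $N(u)$ is the open neighbourhood and $N[u]=N(u)\cup\{u\}$. $\gamma$ denotes domination number. A vertex $u$ is dominated if there is a vertex $v\neq u$ with $N(u)\subseteq N[v]$. Cops and Attacking Robbers: the cop player places $k$ cops on vertices, then the robber chooses a vertex. In each round the cops move (each cop moves to an adjacent vertex or passes), then the robber moves (to an adjacent vertex or passes). The cops win if after finitely many moves a cop moves onto the robber's vertex. Additionally, if the robber moves onto a vertex occupied by a cop, exactly one cop on that vertex is removed from the game; the robber's initial placement on a cop's vertex does not count as an attack. Both players play optimally. The attacking cop number $\mathrm{cc}(G)$ is the least $k$ such that $k$ cops can guarantee a win. *)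

theory Defs
  imports Main
begin

text \<open>A finite simple graph on vertex set V with adjacency relation E (loops are
  implicit: every vertex may pass, so moves go to the closed neighbourhood).\<close>

definition graph :: "'a set \<Rightarrow> ('a \<Rightarrow> 'a \<Rightarrow> bool) \<Rightarrow> bool" where
  "graph V E \<longleftrightarrow> finite V \<and> (\<forall>u v. E u v \<longrightarrow> u \<in> V \<and> v \<in> V) \<and>
     (\<forall>u v. E u v \<longrightarrow> E v u) \<and> (\<forall>u. \<not> E u u)"

definition connected_graph :: "'a set \<Rightarrow> ('a \<Rightarrow> 'a \<Rightarrow> bool) \<Rightarrow> bool" where
  "connected_graph V E \<longleftrightarrow> V \<noteq> {} \<and> (\<forall>u\<in>V. \<forall>v\<in>V. E\<^sup>*\<^sup>* u v)"

definition triangle_free :: "'a set \<Rightarrow> ('a \<Rightarrow> 'a \<Rightarrow> bool) \<Rightarrow> bool" where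
  "triangle_free V E \<longleftrightarrow> \<not> (\<exists>u\<in>V. \<exists>v\<in>V. \<exists>w\<in>V. E u v \<and> E v w \<and> E u w)"

definition open_nbhd :: "('a \<Rightarrow> 'a \<Rightarrow> bool) \<Rightarrow> 'a \<Rightarrow> 'a set" where
  "open_nbhd E u = {v. E u v}"

definition closed_nbhd :: "('a \<Rightarrow> 'a \<Rightarrow> bool) \<Rightarrow> 'a \<Rightarrow> 'a set" where
  "closed_nbhd E u = insert u (open_nbhd E u)"

definition dominated :: "'a set \<Rightarrow> ('a \<Rightarrow> 'a \<Rightarrow> bool) \<Rightarrow> 'a \<Rightarrow> bool" where
  "dominated V E u \<longleftrightarrow> (\<exists>v\<in>V. v \<noteq> u \<and> open_nbhd E u \<subseteq> closed_nbhd E v)"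

definition dominating_set :: "'a set \<Rightarrow> ('a \<Rightarrow> 'a \<Rightarrow> bool) \<Rightarrow> 'a set \<Rightarrow> bool" where
  "dominating_set V E D \<longleftrightarrow> D \<subseteq> V \<and> (\<forall>v\<in>V. v \<in> D \<or> (\<exists>d\<in>D. E d v))"

definition domination_number :: "'a set \<Rightarrow> ('a \<Rightarrow> 'a \<Rightarrow> bool) \<Rightarrow> nat" where
  "domination_number V E = (LEAST n. \<exists>D. dominating_set V E D \<and> card D = n)"

text \<open>A position with the cops to move is given by the
  list of positions of the remaining cops and the robber's vertex.  cop_win E cs r
  means: the cops, to move in this position, can force a capture in finitely many
  moves.  The cops move simultaneously (each to a vertex of its closed
  neighbourhood); if some cop lands on the robber, the cops win.  Otherwise the
  robber moves to a vertex r' of its closed neighbourhood, and if cops are on r',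
  exactly one of them is removed (remove1).\<close>

inductive cop_win :: "('a \<Rightarrow> 'a \<Rightarrow> bool) \<Rightarrow> 'a list \<Rightarrow> 'a \<Rightarrow> bool" for E where
  move: "list_all2 (\<lambda>c c'. c' \<in> closed_nbhd E c) cs cs' \<Longrightarrow>
     (r \<in> set cs' \<or> (\<forall>r'\<in>closed_nbhd E r. cop_win E (remove1 r' cs') r')) \<Longrightarrow>
     cop_win E cs r"

text \<open>k cops can guarantee a win: some initial placement of k cops beats every
  initial robber vertex (the robber's initial placement is never an attack).\<close>

definition k_cops_win :: "'a set \<Rightarrow> ('a \<Rightarrow> 'a \<Rightarrow> bool) \<Rightarrow> nat \<Rightarrow> bool" where
  "k_cops_win V E k \<longleftrightarrow> (\<exists>cs. length cs = k \<and> set cs \<subseteq> V \<and> (\<forall>r\<in>V. cop_win E cs r))"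

definition attacking_cop_number :: "'a set \<Rightarrow> ('a \<Rightarrow> 'a \<Rightarrow> bool) \<Rightarrow> nat" where
  "attacking_cop_number V E = (LEAST k. k_cops_win V E k)"

end

theory Submission
  imports Defs
begin

text \<open>The robber keeps to unguarded vertices, i.e. vertices outside the closed
  neighbourhoods of all cops.  Since no two vertices dominate the graph, such a vertex
  exists initially.  After the cops move, the robber is not caught and looks for an
  unguarded vertex in its closed neighbourhood.  If there is none, N[r] is covered by
  the closed neighbourhoods of the two cops a, b, say with a adjacent to r.  If b is
  not in N[a], the robber attacks a and is then unguarded by b.  Otherwise every
  neighbour of r lies in N[b]: it cannot be adjacent to a by triangle-freeness, and a
  itself lies in N[b].  So r would be dominated by b.\<close>

definition unguarded :: "('a \<Rightarrow> 'a \<Rightarrow> bool) \<Rightarrow> 'a list \<Rightarrow> 'a \<Rightarrow> bool" where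
  "unguarded E cs r \<longleftrightarrow> (\<forall>c\<in>set cs. r \<notin> closed_nbhd E c)"

lemma closed_nbhd_iff: "x \<in> closed_nbhd E a \<longleftrightarrow> x = a \<or> E a x"
  by (auto simp: closed_nbhd_def open_nbhd_def)

lemma graph_edge_sym: "graph V E \<Longrightarrow> E u v \<Longrightarrow> E v u"
  by (simp add: graph_def)

lemma graph_edge_in_V: "graph V E \<Longrightarrow> E u v \<Longrightarrow> u \<in> V \<and> v \<in> V"
  by (simp add: graph_def)

lemma closed_nbhd_sym: "graph V E \<Longrightarrow> x \<in> closed_nbhd E y \<longleftrightarrow> y \<in> closed_nbhd E x"
  by (auto simp: closed_nbhd_iff dest: graph_edge_sym)

lemma triangle_freeD: "graph V E \<Longrightarrow> triangle_free V E \<Longrightarrow> E u v \<Longrightarrow> E v w \<Longrightarrow> \<not> E u w"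
  by (auto simp: triangle_free_def dest: graph_edge_in_V)

lemma unguarded_remove1_swap: "unguarded E (remove1 x [a, b]) r \<longleftrightarrow> unguarded E (remove1 x [b, a]) r"
  by (auto simp: unguarded_def)

lemma list_all2_set2_ex: "list_all2 P xs ys \<Longrightarrow> y \<in> set ys \<Longrightarrow> \<exists>x\<in>set xs. P x y"
  by (induction rule: list_all2_induct) auto

lemma escape_by_attack:
  assumes "graph V E" and "triangle_free V E" and "r \<in> V" and "\<not> dominated V E r"
    and "r \<noteq> b" and "E a r" and "closed_nbhd E r \<subseteq> closed_nbhd E a \<union> closed_nbhd E b"
  shows "unguarded E (remove1 a [a, b]) a"
proof (rule ccontr)
  assume "\<not> ?thesis"
  then have "b \<in> closed_nbhd E a"
    by (auto simp: unguarded_def closed_nbhd_sym[OF assms(1)])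
  have "open_nbhd E r \<subseteq> closed_nbhd E b"
  proof
    fix x assume "x \<in> open_nbhd E r"
    then have "E r x" by (simp add: open_nbhd_def)
    then have "\<not> E a x"
      using triangle_freeD[OF assms(1,2) \<open>E a r\<close>] by blast
    moreover have "x \<in> closed_nbhd E a \<union> closed_nbhd E b"
      using assms(7) \<open>E r x\<close> by (auto simp: closed_nbhd_iff)
    ultimately show "x \<in> closed_nbhd E b"
      using \<open>b \<in> closed_nbhd E a\<close> closed_nbhd_sym[OF assms(1)] by (auto simp: closed_nbhd_iff)
  qed
  moreover have "b \<in> V"
    using \<open>b \<in> closed_nbhd E a\<close> \<open>E a r\<close> graph_edge_in_V[OF assms(1)]
    by (auto simp: closed_nbhd_iff)
  ultimately show False
    using assms(4,5) by (auto simp: dominated_def)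
qed

lemma escape_two_cops:
  assumes "graph V E" and "triangle_free V E" and "r \<in> V" and "\<not> dominated V E r"
    and "r \<noteq> a" and "r \<noteq> b"
  shows "\<exists>r'\<in>closed_nbhd E r. unguarded E (remove1 r' [a, b]) r'"
proof (cases "closed_nbhd E r \<subseteq> closed_nbhd E a \<union> closed_nbhd E b")
  case True
  then have "E a r \<or> E b r"
    using assms(5,6) by (auto simp: closed_nbhd_iff dest: graph_edge_sym[OF assms(1)])
  then show ?thesis
  proof
    assume "E a r"
    then show ?thesis
      using escape_by_attack[OF assms(1-4,6) _ True]
      by (intro bexI[of _ a]) (auto simp: closed_nbhd_iff dest: graph_edge_sym[OF assms(1)])
  next
    assume "E b r"
    then show ?thesis
      using escape_by_attack[OF assms(1-5), of b] True unguarded_remove1_swap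
      by (intro bexI[of _ b]) (auto simp: closed_nbhd_iff dest: graph_edge_sym[OF assms(1)])
  qed
next
  case False
  then obtain r' where "r' \<in> closed_nbhd E r" "r' \<notin> closed_nbhd E a" "r' \<notin> closed_nbhd E b"
    by blast
  then show ?thesis
    by (intro bexI[of _ r']) (auto simp: unguarded_def closed_nbhd_iff)
qed

lemma robber_escape:
  assumes "graph V E" and "triangle_free V E" and "r \<in> V" and "\<not> dominated V E r"
    and "length cs \<le> 2" and "r \<notin> set cs"
  shows "\<exists>r'\<in>closed_nbhd E r. unguarded E (remove1 r' cs) r'"
proof -
  consider "cs = []" | a where "cs = [a]" | a b where "cs = [a, b]"
    using assms(5) by (cases cs rule: remdups_adj.cases) auto
  then show ?thesis
  proof cases
    case 1
    then show ?thesis by (auto simp: unguarded_def closed_nbhd_iff)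
  next
    case (2 a)
    then show ?thesis
    proof (cases "E a r")
      case True
      then show ?thesis
        using 2 by (intro bexI[of _ a]) (auto simp: unguarded_def closed_nbhd_iff
            dest: graph_edge_sym[OF assms(1)])
    next
      case False
      then show ?thesis
        using 2 assms(6) by (intro bexI[of _ r]) (auto simp: unguarded_def closed_nbhd_iff)
    qed
  next
    case (3 a b)
    then show ?thesis
      using escape_two_cops[OF assms(1-4)] assms(6) by simp
  qed
qed

lemma not_cop_win_unguarded:
  assumes "graph V E" and "triangle_free V E" and "\<forall>u\<in>V. \<not> dominated V E u"
  shows "cop_win E cs r \<Longrightarrow> length cs \<le> 2 \<Longrightarrow> r \<in> V \<Longrightarrow> unguarded E cs r \<Longrightarrow> False"
proof (induction rule: cop_win.induct)
  case (move cs cs' r)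
  have "r \<notin> set cs'"
    using move.hyps(1) move.prems(3) list_all2_set2_ex by (fastforce simp: unguarded_def)
  moreover have "length cs' \<le> 2"
    using move.hyps(1) move.prems(1) by (simp add: list_all2_lengthD)
  ultimately obtain r' where "r' \<in> closed_nbhd E r" and "unguarded E (remove1 r' cs') r'"
    using robber_escape[OF assms(1,2) move.prems(2)] assms(3) move.prems(2) by blast
  moreover have "r' \<in> V"
    using \<open>r' \<in> closed_nbhd E r\<close> move.prems(2) graph_edge_in_V[OF assms(1)]
    by (auto simp: closed_nbhd_iff)
  moreover have "length (remove1 r' cs') \<le> 2"
    using \<open>length cs' \<le> 2\<close> by (auto simp: length_remove1)
  ultimately show False
    using move.IH \<open>r \<notin> set cs'\<close> by blast
qed

lemma domination_number_le_card:
  "dominating_set V E D \<Longrightarrow> domination_number V E \<le> card D"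
  unfolding domination_number_def by (rule Least_le) blast

lemma unguarded_vertex_exists:
  assumes "domination_number V E > length cs" and "set cs \<subseteq> V"
  shows "\<exists>r\<in>V. unguarded E cs r"
proof (rule ccontr)
  assume "\<not> ?thesis"
  then have "dominating_set V E (set cs)"
    using assms(2) by (fastforce simp: dominating_set_def unguarded_def closed_nbhd_iff)
  then have "domination_number V E \<le> length cs"
    using domination_number_le_card card_length le_trans by blast
  then show False
    using assms(1) by simp
qed

lemma k_cops_win_card:
  assumes "finite V"
  shows "k_cops_win V E (card V)"
proof -
  obtain cs where cs: "set cs = V" "distinct cs"
    using finite_distinct_list[OF assms] by blast
  have stay: "list_all2 (\<lambda>c c'. c' \<in> closed_nbhd E c) cs cs"
    by (simp add: list_all2_refl closed_nbhd_iff)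
  have "cop_win E cs r" if "r \<in> V" for r
    using cop_win.move[OF stay] that cs(1) by blast
  then show ?thesis
    using cs distinct_card unfolding k_cops_win_def by fastforce
qed

theorem lemma2:
  fixes V :: "'a set" and E :: "'a \<Rightarrow> 'a \<Rightarrow> bool"
  assumes "graph V E"
    and "connected_graph V E"
    and "triangle_free V E"
    and "\<forall>u\<in>V. \<not> dominated V E u"
    and "domination_number V E \<ge> 3"
  shows "attacking_cop_number V E > 2"
proof -
  have no_win: "\<not> k_cops_win V E k" if k_le: "k \<le> 2" for k
  proof
    assume "k_cops_win V E k"
    then obtain cs where cs: "length cs = k" "set cs \<subseteq> V" "\<forall>r\<in>V. cop_win E cs r"
      unfolding k_cops_win_def by blast
    then obtain r where "r \<in> V" "unguarded E cs r"
      using unguarded_vertex_exists[of cs V E] assms(5) k_le by auto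
    then show False
      using not_cop_win_unguarded[OF assms(1,3,4)] cs k_le by blast
  qed
  have "finite V"
    using assms(1) by (simp add: graph_def)
  then have "k_cops_win V E (card V)"
    by (rule k_cops_win_card)
  then have "k_cops_win V E (attacking_cop_number V E)"
    unfolding attacking_cop_number_def by (rule LeastI)
  then show ?thesis
    using no_win by (meson not_less)
qed

end
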